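(* Let $A$ be a first countable locally convex topological vector space over $\mathbb C$, give $A^\vee$ the topology of uniform convergence on compact sets, and let $K\subset A^\vee$ be compact. Then $\bigcup_{\phi\in K}\ker\phi$ is closed in $A$.
   Context: $A^\vee$ is the space of continuous linear functionals on $A$, with subbasis $\{\phi:\phi(C)\subset U\}$, $C\subset A$ compact, $U\subset\mathbb C$ open. *)

theory Defs
  imports "HOL-Analysis.Analysis"
begin

definition complex_tvs :: "(complex \<Rightarrow> 'a::{ab_group_add,topological_space} \<Rightarrow> 'a) \<Rightarrow> bool" where
  "complex_tvs smult_c \<longleftrightarrow>
     Vector_Spaces.vector_space smult_c \<and>
     continuous_on UNIV (\<lambda>(x::'a, y::'a). x + y) \<and>
     continuous_on UNIV (\<lambda>(c::complex, x::'a). smult_c c x)"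

definition convex_wrt :: "(complex \<Rightarrow> 'a::ab_group_add \<Rightarrow> 'a) \<Rightarrow> 'a set \<Rightarrow> bool" where
  "convex_wrt smult_c V \<longleftrightarrow>
     (\<forall>x\<in>V. \<forall>y\<in>V. \<forall>t::real. 0 \<le> t \<and> t \<le> 1 \<longrightarrow>
        smult_c (complex_of_real t) x + smult_c (complex_of_real (1 - t)) y \<in> V)"

definition locally_convex :: "(complex \<Rightarrow> 'a::{ab_group_add,topological_space} \<Rightarrow> 'a) \<Rightarrow> bool" where
  "locally_convex smult_c \<longleftrightarrow>
     (\<forall>U. open U \<and> 0 \<in> U \<longrightarrow> (\<exists>V. open V \<and> 0 \<in> V \<and> V \<subseteq> U \<and> convex_wrt smult_c V))"

definition cdual :: "(complex \<Rightarrow> 'a::{ab_group_add,topological_space} \<Rightarrow> 'a) \<Rightarrow> ('a \<Rightarrow> complex) set" where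
  "cdual smult_c = {\<phi>. Vector_Spaces.linear smult_c (*) \<phi> \<and> continuous_on UNIV \<phi>}"

text \<open>Topology of uniform convergence on compact sets (compact-open topology) on A^\<or>,
  generated by the subbasis {\<phi> \<in> A^\<or>. \<phi>(C) \<subseteq> U}, C compact, U open.\<close>
definition dual_topology :: "(complex \<Rightarrow> 'a::{ab_group_add,topological_space} \<Rightarrow> 'a) \<Rightarrow> ('a \<Rightarrow> complex) topology" where
  "dual_topology smult_c = subtopology
     (topology_generated_by {{\<phi> \<in> cdual smult_c. \<phi> ` C \<subseteq> U} | C U. compact C \<and> open U})
     (cdual smult_c)"

end

theory Submission
  imports Defs
begin

text \<open>Nothing about linearity or local convexity is needed. If \<open>x\<^sub>n \<rightarrow> x\<close> with
  \<open>\<phi>(x) \<noteq> 0\<close> for all \<open>\<phi> \<in> K\<close>, then each \<open>\<phi> \<in> K\<close> is bounded away from 0 on some tail of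
  the sequence together with its limit; this compact set gives a compact-open neighbourhood
  of \<open>\<phi>\<close>, and finitely many of these cover \<open>K\<close>. Hence some \<open>x\<^sub>n\<close> lies outside every
  kernel, and as \<open>A\<close> is first countable, sequential closedness suffices.\<close>

definition compact_open_on :: "('a::topological_space \<Rightarrow> 'b::topological_space) set \<Rightarrow> ('a \<Rightarrow> 'b) topology"
  where "compact_open_on D = topology_generated_by {{\<phi> \<in> D. \<phi> ` C \<subseteq> U} | C U. compact C \<and> open U}"

lemma dual_topology_eq_compact_open_on:
  "dual_topology smult_c = subtopology (compact_open_on (cdual smult_c)) (cdual smult_c)"
  by (simp add: dual_topology_def compact_open_on_def)

lemma openin_compact_open_on:
  "compact C \<Longrightarrow> open U \<Longrightarrow> openin (compact_open_on D) {\<phi> \<in> D. \<phi> ` C \<subseteq> U}"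
  unfolding compact_open_on_def by (rule topology_generated_by_Basis) blast

lemma compact_insert_limit_range:
  fixes s :: "nat \<Rightarrow> 'a::topological_space"
  assumes "s \<longlonglongrightarrow> l"
  shows "compact (insert l (range s))"
proof -
  have "limitin euclidean s l sequentially"
    using assms by (simp add: limitin_canonical_iff)
  then have "compactin euclidean (insert l (range s))"
    by (rule compactin_sequence_with_limit) auto
  then show ?thesis by simp
qed

lemma compact_open_on_eventually_uniform:
  fixes s :: "nat \<Rightarrow> 'a::topological_space" and U :: "'b::topological_space set"
  assumes "K \<subseteq> D" and K: "compactin (compact_open_on D) K"
    and cont: "\<And>\<phi>. \<phi> \<in> K \<Longrightarrow> continuous_on UNIV \<phi>"
    and lim: "s \<longlonglongrightarrow> l" and "open U" and l: "\<And>\<phi>. \<phi> \<in> K \<Longrightarrow> \<phi> l \<in> U"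
  shows "eventually (\<lambda>n. \<forall>\<phi>\<in>K. \<phi> (s n) \<in> U) sequentially"
proof -
  have "\<exists>N. \<forall>n\<ge>N. \<phi> (s n) \<in> U" if "\<phi> \<in> K" for \<phi>
  proof -
    have "(\<lambda>n. \<phi> (s n)) \<longlonglongrightarrow> \<phi> l"
      using cont[OF that] lim by (rule continuous_on_tendsto_compose) auto
    then show ?thesis
      using \<open>open U\<close> l[OF that] by (simp add: tendsto_def eventually_sequentially)
  qed
  then obtain N where N: "\<And>\<phi> n. \<phi> \<in> K \<Longrightarrow> n \<ge> N \<phi> \<Longrightarrow> \<phi> (s n) \<in> U"
    by metis
  define tail where "tail \<phi> = insert l (range (\<lambda>n. s (n + N \<phi>)))" for \<phi>
  define W where "W \<phi> = {\<psi> \<in> D. \<psi> ` tail \<phi> \<subseteq> U}" for \<phi>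
  have "openin (compact_open_on D) (W \<phi>)" for \<phi>
    unfolding W_def tail_def
    using compact_insert_limit_range[OF LIMSEQ_ignore_initial_segment[OF lim]] \<open>open U\<close>
    by (rule openin_compact_open_on)
  moreover have "K \<subseteq> \<Union> (W ` K)"
  proof
    fix \<phi> assume "\<phi> \<in> K"
    then have "\<phi> \<in> W \<phi>"
      unfolding W_def tail_def using \<open>K \<subseteq> D\<close> l N by auto
    with \<open>\<phi> \<in> K\<close> show "\<phi> \<in> \<Union> (W ` K)" by blast
  qed
  ultimately obtain F where "finite F" "F \<subseteq> W ` K" "K \<subseteq> \<Union> F"
    using K unfolding compactin_def by (metis imageE)
  then obtain G where G: "finite G" "G \<subseteq> K" "K \<subseteq> \<Union> (W ` G)"
    by (metis finite_subset_image)
  have "eventually (\<lambda>n. \<forall>\<phi>\<in>G. n \<ge> N \<phi>) sequentially"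
    using \<open>finite G\<close> by (simp add: eventually_ball_finite_distrib eventually_ge_at_top)
  then show ?thesis
  proof (rule eventually_mono)
    fix n assume n: "\<forall>\<phi>\<in>G. n \<ge> N \<phi>"
    show "\<forall>\<psi>\<in>K. \<psi> (s n) \<in> U"
    proof
      fix \<psi> assume "\<psi> \<in> K"
      then obtain \<phi> where "\<phi> \<in> G" "\<psi> \<in> W \<phi>" using G by blast
      moreover have "s n \<in> tail \<phi>"
        unfolding tail_def using n \<open>\<phi> \<in> G\<close> by (auto intro: image_eqI[where x="n - N \<phi>"])
      ultimately show "\<psi> (s n) \<in> U" unfolding W_def by blast
    qed
  qed
qed

lemma closed_Union_vimage_compactin_compact_open_on:
  fixes K :: "('a::first_countable_topology \<Rightarrow> 'b::topological_space) set"
  assumes "K \<subseteq> D" and "compactin (compact_open_on D) K"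
    and "\<And>\<phi>. \<phi> \<in> K \<Longrightarrow> continuous_on UNIV \<phi>" and "closed Z"
  shows "closed (\<Union>\<phi>\<in>K. \<phi> -` Z)"
  unfolding closed_sequential_limits
proof (intro allI impI, elim conjE)
  fix s l
  assume s: "\<forall>n. s n \<in> (\<Union>\<phi>\<in>K. \<phi> -` Z)" and "s \<longlonglongrightarrow> l"
  show "l \<in> (\<Union>\<phi>\<in>K. \<phi> -` Z)"
  proof (rule ccontr)
    assume "l \<notin> (\<Union>\<phi>\<in>K. \<phi> -` Z)"
    then have "eventually (\<lambda>n. \<forall>\<phi>\<in>K. \<phi> (s n) \<in> - Z) sequentially"
      using assms \<open>s \<longlonglongrightarrow> l\<close>
      by (intro compact_open_on_eventually_uniform[where D = D]) (auto simp: open_Compl)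
    then obtain n where "\<forall>\<phi>\<in>K. \<phi> (s n) \<notin> Z" by (auto dest: eventually_happens)
    with s show False by blast
  qed
qed

theorem lemma7p9:
  fixes smult_c :: "complex \<Rightarrow> 'a::{ab_group_add,first_countable_topology} \<Rightarrow> 'a"
    and K :: "('a \<Rightarrow> complex) set"
  assumes "complex_tvs smult_c"
    and "locally_convex smult_c"
    and "K \<subseteq> cdual smult_c"
    and "compactin (dual_topology smult_c) K"
  shows "closed (\<Union>\<phi>\<in>K. {x. \<phi> x = 0})"
proof -
  have "compactin (compact_open_on (cdual smult_c)) K"
    using assms(4) by (simp add: dual_topology_eq_compact_open_on compactin_subtopology)
  moreover have "continuous_on UNIV \<phi>" if "\<phi> \<in> K" for \<phi>
    using assms(3) that by (auto simp: cdual_def)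
  ultimately have "closed (\<Union>\<phi>\<in>K. \<phi> -` {0})"
    using assms(3) by (intro closed_Union_vimage_compactin_compact_open_on) auto
  then show ?thesis by (simp add: vimage_def)
qed

end
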